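(* Let $a,n,r\in\mathbb{N}$ (so $r\ge1$), $k_1,\ldots,k_n\in\mathbb{N}$, and let $g_1,\ldots,g_n$ be arbitrary arithmetic functions. Then $$\frac{1}{K^{ar}}\sum_{j=1}^{K^a} j^r\prod_{i=1}^n\Bigl(\sum_{d_i|k_i,\ d_i^a|j}(g_i*\mu)\Bigl(\frac{k_i}{d_i}\Bigr)\Bigr)=\frac12\prod_{i=1}^n g_i(k_i)+\frac{1}{r+1}\sum_{m=0}^{\lfloor r/2\rfloor}\binom{r+1}{2m}\frac{B_{2m}}{K^{a(2m-1)}}\sum_{d_1|k_1,\ldots,d_n|k_n}\bigl(\operatorname{lcm}(d_1,\ldots,d_n)\bigr)^{a(2m-1)}\prod_{i=1}^n (g_i*\mu)\Bigl(\frac{k_i}{d_i}\Bigr).$$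
   Context: An arithmetic function is a map $\mathbb{N}\to\mathbb{C}$; $\mu$ is the Möbius function and $(f*g)(n)=\sum_{d|n}f(d)g(n/d)$ the Dirichlet convolution. $K=\operatorname{lcm}(k_1,\ldots,k_n)$. The Bernoulli numbers $B_m$ are defined by $\frac{t}{e^t-1}=\sum_{m\ge0}B_m\frac{t^m}{m!}$. *)

theory Defs
  imports "HOL-Computational_Algebra.Computational_Algebra"
begin

definition moebius :: "nat \<Rightarrow> complex" where
  "moebius n = (if n = 0 \<or> \<not> squarefree n then 0
               else (-1) ^ card (prime_factors n))"

definition dconv :: "(nat \<Rightarrow> complex) \<Rightarrow> (nat \<Rightarrow> complex) \<Rightarrow> nat \<Rightarrow> complex" where
  "dconv f g n = (\<Sum>d | d dvd n. f d * g (n div d))"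

definition bernoulli :: "nat \<Rightarrow> real" where
  "bernoulli m = fact m * fps_nth (fps_X / (fps_exp 1 - 1)) m"

end

theory Submission
  imports Defs
begin

text \<open>Multiplying out the product over \<open>i\<close> turns the left-hand side into a sum over divisor
  tuples \<open>d\<close> of \<open>\<Prod>i. (g i * \<mu>)(k i / d i)\<close> times the normalised sum of \<open>j^r\<close> over the
  multiples \<open>j \<le> K^a\<close> of \<open>lcm(d)^a\<close>, because all \<open>d i^a\<close> divide \<open>j\<close> iff \<open>lcm(d)^a\<close> does.
  That power sum is given by Faulhaber's formula, in which only the even Bernoulli numbers and
  \<open>B 1 = -1/2\<close> occur. Summing the constant term over all tuples gives \<open>\<Prod>i. g i (k i)\<close> by
  Moebius inversion.\<close>

lemma prime_factorization_Prod_primes: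
  fixes S :: "nat set"
  assumes "finite S" "\<And>p. p \<in> S \<Longrightarrow> prime p"
  shows "prime_factorization (\<Prod>S) = mset_set S"
  using prime_factorization_prod_mset_primes[of "mset_set S"] assms
  by (simp add: prod_unfold_prod_mset)

lemma Prod_prime_factors_squarefree:
  fixes d :: nat
  assumes "squarefree d"
  shows "\<Prod>(prime_factors d) = d"
proof -
  have d: "d \<noteq> 0" using assms by (cases "d = 0") simp_all
  have "prime_factorization d = mset_set (prime_factors d)"
  proof (rule multiset_eqI)
    fix p
    show "count (prime_factorization d) p = count (mset_set (prime_factors d)) p"
    proof (cases "p \<in> prime_factors d")
      case True
      then have "multiplicity p d = 1"
        using assms d by (simp add: squarefree_factorial_semiring')
      with True show ?thesis by (auto simp: count_prime_factorization)
    qed (simp add: not_in_iff)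
  qed
  then have "prod_mset (mset_set (prime_factors d)) = d"
    using prod_mset_prime_factorization_nat[of d] d by simp
  then show ?thesis by (simp add: prod_unfold_prod_mset)
qed

lemma sum_Pow_minus_one_power:
  assumes "finite A"
  shows "(\<Sum>S\<in>Pow A. (-1 :: 'a :: comm_ring_1) ^ card S) = (if A = {} then 1 else 0)"
proof -
  have "(\<Prod>x\<in>A. -1 + 1 :: 'a) = (\<Sum>S\<in>Pow A. (-1) ^ card S)"
    using prod_add[OF assms, of "\<lambda>_. -1 :: 'a" "\<lambda>_. 1"] by simp
  then show ?thesis using assms by (simp add: power_0_left)
qed

lemma sum_moebius_divisors:
  fixes m :: nat
  assumes "m > 0"
  shows "(\<Sum>d | d dvd m. moebius d) = (if m = 1 then 1 else 0)"
proof -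
  have "(\<Sum>d | d dvd m. moebius d) = (\<Sum>d | d dvd m \<and> squarefree d. (-1) ^ card (prime_factors d))"
    using assms by (intro sum.mono_neutral_cong_right) (auto simp: moebius_def)
  \<comment> \<open>the squarefree divisors of \<open>m\<close> are the products of the subsets of its prime factors\<close>
  also have "\<dots> = (\<Sum>S\<in>Pow (prime_factors m). (-1) ^ card S)"
  proof (rule sum.reindex_bij_witness[where i = Prod and j = prime_factors])
    fix S assume "S \<in> Pow (prime_factors m)"
    then have S: "finite S" "S \<subseteq> prime_factors m" "\<And>p. p \<in> S \<Longrightarrow> prime p"
      using finite_subset by auto
    show "prime_factors (\<Prod>S) = S"
      using prime_factorization_Prod_primes[OF S(1,3)] S(1) by simp
    have "mset_set S \<subseteq># prime_factorization m"
      using subset_imp_msubset_mset_set[OF S(2)] mset_set_set_mset_msubset subset_mset.order_trans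
      by blast
    then have "\<Prod>S dvd m"
      using prod_mset_subset_imp_dvd assms by (fastforce simp: prod_unfold_prod_mset)
    moreover have "squarefree (\<Prod>S)"
      using S by (intro squarefree_prod_coprime) (auto intro: primes_coprime squarefree_prime)
    ultimately show "\<Prod>S \<in> {d. d dvd m \<and> squarefree d}" by simp
  next
    fix d assume d: "d \<in> {d. d dvd m \<and> squarefree d}"
    then show "\<Prod>(prime_factors d) = d"
      by (simp add: Prod_prime_factors_squarefree)
    show "prime_factors d \<in> Pow (prime_factors m)"
      using d assms dvd_prime_factors[of m d] by auto
    show "(-1) ^ card (prime_factors d) = (-1 :: complex) ^ card (prime_factors d)" ..
  qed
  also have "\<dots> = (if m = 1 then 1 else 0)"
    using assms by (simp add: sum_Pow_minus_one_power prime_factorization_empty_iff)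
  finally show ?thesis .
qed

lemma sum_divisors_div_self:
  fixes k :: nat
  assumes "k > 0"
  shows "(\<Sum>e | e dvd k. f (k div e)) = (\<Sum>e | e dvd k. f e)"
  by (rule sum.reindex_bij_witness[where i = "\<lambda>e. k div e" and j = "\<lambda>e. k div e"])
     (use assms in \<open>auto simp: div_div_eq_right intro: dvd_div_mult_self\<close>)

lemma sum_multiples_dividing:
  fixes c k :: nat
  assumes "c dvd k" "k > 0"
  shows "(\<Sum>e | e dvd k \<and> c dvd e. f (e div c)) = (\<Sum>u | u dvd k div c. f u)"
  by (rule sum.reindex_bij_witness[where i = "\<lambda>u. c * u" and j = "\<lambda>e. e div c"])
     (use assms in auto)

lemma sum_divisors_dconv_moebius:
  fixes k :: nat
  assumes "k > 0"
  shows "(\<Sum>e | e dvd k. dconv g moebius (k div e)) = g k"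
proof -
  have fin: "finite {d. d dvd k}" using assms by simp
  have "(\<Sum>e | e dvd k. dconv g moebius (k div e)) = (\<Sum>e | e dvd k. dconv g moebius e)"
    by (rule sum_divisors_div_self[OF assms])
  also have "\<dots> = (\<Sum>e | e dvd k. \<Sum>c | c dvd k \<and> c dvd e. g c * moebius (e div c))"
    unfolding dconv_def by (intro sum.cong) (auto intro: dvd_trans)
  also have "\<dots> = (\<Sum>c | c dvd k. g c * (\<Sum>e | e dvd k \<and> c dvd e. moebius (e div c)))"
    using sum.swap_restrict[OF fin fin, of "\<lambda>e c. g c * moebius (e div c)" "\<lambda>e c. c dvd e"]
    by (simp add: sum_distrib_left conj_commute)
  also have "\<dots> = (\<Sum>c | c dvd k. if c = k then g k else 0)"
  proof (intro sum.cong refl)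
    fix c assume "c \<in> {c. c dvd k}"
    then have "c dvd k" by simp
    moreover have "k div c > 0" "k div c = 1 \<longleftrightarrow> c = k"
      using \<open>c dvd k\<close> assms by auto
    ultimately show "g c * (\<Sum>e | e dvd k \<and> c dvd e. moebius (e div c)) = (if c = k then g k else 0)"
      using assms by (simp add: sum_multiples_dividing sum_moebius_divisors)
  qed
  also have "\<dots> = g k" using fin by simp
  finally show ?thesis .
qed

lemma sum_PiE_divisors_dconv_moebius:
  fixes k :: "'i \<Rightarrow> nat"
  assumes "finite I" "\<And>i. i \<in> I \<Longrightarrow> k i > 0"
  shows "(\<Sum>d \<in> PiE I (\<lambda>i. {e. e dvd k i}). \<Prod>i\<in>I. dconv (g i) moebius (k i div d i)) =
    (\<Prod>i\<in>I. g i (k i))"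
proof -
  have "(\<Sum>d \<in> PiE I (\<lambda>i. {e. e dvd k i}). \<Prod>i\<in>I. dconv (g i) moebius (k i div d i)) =
      (\<Prod>i\<in>I. \<Sum>e | e dvd k i. dconv (g i) moebius (k i div e))"
    using assms by (intro prod_sum_PiE[symmetric]) simp_all
  also have "\<dots> = (\<Prod>i\<in>I. g i (k i))"
    using assms(2) by (intro prod.cong refl sum_divisors_dconv_moebius) simp
  finally show ?thesis .
qed

definition bernoulli_fps :: "real fps" where
  "bernoulli_fps = fps_X / (fps_exp 1 - 1)"

lemma bernoulli_conv_fps_nth: "bernoulli m = fact m * bernoulli_fps $ m"
  by (simp add: bernoulli_def bernoulli_fps_def)

lemma fps_exp_minus_one_nonzero: "fps_exp c - 1 \<noteq> (0 :: 'a :: field_char_0 fps)" if "c \<noteq> 0"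
proof
  assume "fps_exp c - 1 = 0"
  then have "(fps_exp c - 1) $ 1 = 0" by simp
  with that show False by simp
qed

lemma bernoulli_fps_mult_exp_minus_one: "bernoulli_fps * (fps_exp 1 - 1) = fps_X"
proof -
  have "subdegree (fps_exp (1 :: real) - 1) = 1"
    by (rule subdegreeI) auto
  then show ?thesis
    unfolding bernoulli_fps_def
    by (intro fps_times_divide_eq fps_exp_minus_one_nonzero) simp_all
qed

lemma bernoulli_fps_compose_uminus: "bernoulli_fps oo - fps_X = fps_X + bernoulli_fps"
proof -
  define E where "E = fps_exp (1 :: real)"
  have E1: "E - 1 \<noteq> 0" unfolding E_def by (rule fps_exp_minus_one_nonzero) simp
  have "(bernoulli_fps oo - fps_X) * (fps_exp (-1) - 1) = - fps_X"
    using arg_cong[OF bernoulli_fps_mult_exp_minus_one, of "\<lambda>f. f oo - fps_X"]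
    by (simp add: fps_compose_mult_distrib fps_compose_sub_distrib)
  moreover have "fps_exp (-1) * E = 1"
    unfolding E_def by (simp flip: fps_exp_add_mult)
  then have "E - 1 = - ((fps_exp (-1) - 1) * E)"
    by (simp add: algebra_simps)
  ultimately have "(bernoulli_fps oo - fps_X) * (E - 1) = fps_X * E"
    by (simp add: mult.assoc[symmetric])
  also have "\<dots> = (fps_X + bernoulli_fps) * (E - 1)"
    using bernoulli_fps_mult_exp_minus_one by (simp add: E_def algebra_simps)
  finally show ?thesis using E1 by simp
qed

lemma bernoulli_odd_eq_0:
  assumes "odd m" "m \<noteq> 1"
  shows "bernoulli m = 0"
  using arg_cong[OF bernoulli_fps_compose_uminus, of "\<lambda>f. f $ m"] assms
  by (simp add: bernoulli_conv_fps_nth fps_compose_uminus')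

lemma bernoulli_1: "bernoulli 1 = -1/2"
  using arg_cong[OF bernoulli_fps_compose_uminus, of "\<lambda>f. f $ 1"]
  by (simp add: bernoulli_conv_fps_nth fps_compose_uminus')

lemma sum_powers_bernoulli:
  "real (r + 1) * (\<Sum>t<N. real t ^ r) =
     (\<Sum>i\<le>r. real ((r + 1) choose i) * bernoulli i * real N ^ (r + 1 - i))"
proof -
  have geometric: "(fps_exp 1 - 1) * (\<Sum>t<N. fps_exp (real t)) = fps_exp (real N) - 1"
  proof (induction N)
    case (Suc N)
    have "fps_exp (real (Suc N)) = fps_exp (real N) * fps_exp 1"
      by (simp add: fps_exp_add_mult[symmetric] add.commute)
    with Suc show ?case by (simp add: algebra_simps)
  qed simp
  \<comment> \<open>compare coefficients of \<open>X^(r+1)\<close> in \<open>X * (\<Sum>t<N. e^(tX)) = B(X) * (e^(NX) - 1)\<close>\<close>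
  have "(\<Sum>t<N. real t ^ r / fact r) = (fps_X * (\<Sum>t<N. fps_exp (real t))) $ (r + 1)"
    by (simp add: fps_sum_nth)
  also have "\<dots> = (bernoulli_fps * (fps_exp (real N) - 1)) $ (r + 1)"
    by (simp flip: geometric bernoulli_fps_mult_exp_minus_one add: mult.assoc)
  also have "\<dots> = (\<Sum>i\<le>r + 1. bernoulli_fps $ i * (fps_exp (real N) - 1) $ (r + 1 - i))"
    by (simp add: fps_mult_nth atLeast0AtMost)
  also have "\<dots> = (\<Sum>i\<le>r. bernoulli_fps $ i * (real N ^ (r + 1 - i) / fact (r + 1 - i)))"
    by simp
  also have "\<dots> = (\<Sum>i\<le>r. real ((r + 1) choose i) * bernoulli i * real N ^ (r + 1 - i)) / fact (r + 1)"
    unfolding sum_divide_distrib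
    by (intro sum.cong refl) (simp add: binomial_fact bernoulli_conv_fps_nth field_simps del: fact_Suc)
  finally have "(\<Sum>t<N. real t ^ r) / fact r =
      (\<Sum>i\<le>r. real ((r + 1) choose i) * bernoulli i * real N ^ (r + 1 - i)) / (real (r + 1) * fact r)"
    by (simp add: sum_divide_distrib)
  then show ?thesis
    by (simp add: divide_simps mult.commute)
qed

lemma sum_atMost_odd_vanishing:
  fixes f :: "nat \<Rightarrow> 'a :: comm_monoid_add"
  assumes "\<And>i. odd i \<Longrightarrow> i \<noteq> 1 \<Longrightarrow> f i = 0" "r \<ge> 1"
  shows "(\<Sum>i\<le>r. f i) = f 1 + (\<Sum>m = 0..r div 2. f (2 * m))"
proof -
  have "i \<in> (\<lambda>m. 2 * m) ` {0..r div 2}" if "i \<le> r" "f i \<noteq> 0" "i \<noteq> 1" for i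
  proof -
    have "even i" using that assms(1) by auto
    with \<open>i \<le> r\<close> show ?thesis by (auto elim!: evenE)
  qed
  then have "(\<Sum>i\<le>r. f i) = (\<Sum>i \<in> insert 1 ((\<lambda>m. 2 * m) ` {0..r div 2}). f i)"
    using assms(2) by (intro sum.mono_neutral_right) auto
  also have "\<dots> = f 1 + (\<Sum>m = 0..r div 2. f (2 * m))"
    by (subst sum.insert) (auto simp: sum.reindex inj_on_def)
  finally show ?thesis .
qed

lemma faulhaber:
  assumes "r \<ge> 1"
  shows "(\<Sum>t = 1..N. real t ^ r) = real N ^ r / 2 + 1 / real (r + 1) *
     (\<Sum>m = 0..r div 2. real ((r + 1) choose (2 * m)) * bernoulli (2 * m) * real N ^ (r + 1 - 2 * m))"
proof -
  define f where "f i = real ((r + 1) choose i) * bernoulli i * real N ^ (r + 1 - i)" for i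
  have "real (r + 1) * (\<Sum>t<N. real t ^ r) = f 1 + (\<Sum>m = 0..r div 2. f (2 * m))"
    unfolding sum_powers_bernoulli f_def[symmetric]
    by (rule sum_atMost_odd_vanishing) (use assms in \<open>simp_all add: f_def bernoulli_odd_eq_0\<close>)
  moreover have "f 1 = - real (r + 1) * real N ^ r / 2"
    using bernoulli_1 by (simp add: f_def algebra_simps)
  moreover have "(\<Sum>t = 1..N. real t ^ r) = (\<Sum>t<N. real t ^ r) + real N ^ r"
    using assms by (induction N) (simp_all add: sum.atLeast_Suc_atMost_Suc_shift)
  ultimately have "(\<Sum>t = 1..N. real t ^ r) =
      real N ^ r / 2 + 1 / real (r + 1) * (\<Sum>m = 0..r div 2. f (2 * m))"
    by (simp add: field_simps)
  then show ?thesis by (simp add: f_def)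
qed

lemma faulhaber_normalized:
  fixes N r :: nat
  assumes "N > 0" "r \<ge> 1"
  shows "(\<Sum>t = 1..N. (of_nat t :: complex) ^ r) / of_nat N ^ r = 1 / 2 + 1 / of_nat (r + 1) *
     (\<Sum>m = 0..r div 2. of_nat ((r + 1) choose (2 * m)) * complex_of_real (bernoulli (2 * m)) *
        of_nat N powi (1 - 2 * int m))"
proof -
  define c where "c m = of_nat ((r + 1) choose (2 * m)) * complex_of_real (bernoulli (2 * m))" for m
  define X where "X = (of_nat N :: complex)"
  have X: "X \<noteq> 0" using assms(1) by (simp add: X_def)
  have "(\<Sum>t = 1..N. (of_nat t :: complex) ^ r) / X ^ r =
      (X ^ r / 2 + 1 / of_nat (r + 1) * (\<Sum>m = 0..r div 2. c m * X ^ (r + 1 - 2 * m))) / X ^ r"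
    using arg_cong[OF faulhaber[OF assms(2), of N], of complex_of_real]
    by (simp add: c_def X_def)
  also have "\<dots> = 1 / 2 + 1 / of_nat (r + 1) * ((\<Sum>m = 0..r div 2. c m * X ^ (r + 1 - 2 * m)) / X ^ r)"
    using X by (simp add: add_divide_distrib)
  also have "(\<Sum>m = 0..r div 2. c m * X ^ (r + 1 - 2 * m)) / X ^ r = (\<Sum>m = 0..r div 2. c m * X powi (1 - 2 * int m))"
    unfolding sum_divide_distrib times_divide_eq_right[symmetric]
  proof (intro sum.cong refl)
    fix m assume "m \<in> {0..r div 2}"
    then have "int (r + 1 - 2 * m) - int r = 1 - 2 * int m" by auto
    moreover have "X ^ (r + 1 - 2 * m) / X ^ r = X powi (int (r + 1 - 2 * m) - int r)"
      using X by (simp add: power_int_diff)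
    ultimately show "c m * (X ^ (r + 1 - 2 * m) / X ^ r) = c m * X powi (1 - 2 * int m)" by simp
  qed
  finally show ?thesis by (simp add: c_def X_def)
qed

lemma sum_multiples_upto:
  fixes Q M :: nat
  assumes "Q > 0"
  shows "(\<Sum>j = 1..Q * M. if Q dvd j then f j else 0) = (\<Sum>t = 1..M. f (Q * t))"
proof -
  have "{j \<in> {1..Q * M}. Q dvd j} = (\<lambda>t. Q * t) ` {1..M}"
    using assms by (auto intro: Suc_leI)
  then show ?thesis
    using assms by (simp add: sum.inter_filter[symmetric] sum.reindex inj_on_def)
qed

lemma sum_powers_of_multiples:
  fixes K L a r :: nat
  assumes "L dvd K" "K > 0" "r \<ge> 1"
  defines "E \<equiv> \<lambda>m :: nat. int a * (2 * int m - 1)"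
  shows "1 / of_nat K ^ (a * r) * (\<Sum>j = 1..K ^ a. if L ^ a dvd j then (of_nat j :: complex) ^ r else 0)
    = 1 / 2 + 1 / of_nat (r + 1) *
      (\<Sum>m = 0..r div 2. of_nat ((r + 1) choose (2 * m)) * complex_of_real (bernoulli (2 * m))
         / of_nat K powi E m * of_nat L powi E m)"
proof -
  obtain M where K: "K = L * M" using assms(1) by (rule dvdE)
  have "L > 0" "M > 0" using assms(2) K by auto
  have powers: "of_nat (M ^ a) powi (1 - 2 * int m) = (of_nat L powi E m / of_nat K powi E m :: complex)" for m
    using \<open>L > 0\<close> \<open>M > 0\<close>
    by (simp add: K E_def power_int_power power_int_mult_distrib power_int_minus_divide[symmetric] algebra_simps)
  have "(\<Sum>j = 1..K ^ a. if L ^ a dvd j then (of_nat j :: complex) ^ r else 0) =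
      (\<Sum>t = 1..M ^ a. of_nat (L ^ a * t) ^ r)"
    unfolding K power_mult_distrib using \<open>L > 0\<close>
    by (intro sum_multiples_upto[where f = "\<lambda>j. of_nat j ^ r"]) simp
  also have "\<dots> = of_nat L ^ (a * r) * (\<Sum>t = 1..M ^ a. of_nat t ^ r)"
    by (simp add: sum_distrib_left power_mult_distrib power_mult)
  finally have "1 / of_nat K ^ (a * r) * (\<Sum>j = 1..K ^ a. if L ^ a dvd j then (of_nat j :: complex) ^ r else 0)
      = (\<Sum>t = 1..M ^ a. (of_nat t :: complex) ^ r) / of_nat (M ^ a) ^ r"
    using \<open>L > 0\<close> by (simp add: K power_mult_distrib power_mult mult.commute)
  also have "\<dots> = 1 / 2 + 1 / of_nat (r + 1) *
      (\<Sum>m = 0..r div 2. of_nat ((r + 1) choose (2 * m)) * complex_of_real (bernoulli (2 * m)) *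
         of_nat (M ^ a) powi (1 - 2 * int m))"
    using \<open>M > 0\<close> assms(3) by (intro faulhaber_normalized) simp_all
  also have "\<dots> = 1 / 2 + 1 / of_nat (r + 1) *
      (\<Sum>m = 0..r div 2. of_nat ((r + 1) choose (2 * m)) * complex_of_real (bernoulli (2 * m))
         / of_nat K powi E m * of_nat L powi E m)"
    unfolding powers by simp
  finally show ?thesis .
qed

lemma lcm_power_nat: "lcm x y ^ a = lcm (x ^ a) (y ^ a)" for x y :: nat
proof (cases "x = 0 \<or> y = 0")
  case False
  have "gcd (x ^ a) (y ^ a) * lcm (x ^ a) (y ^ a) = gcd (x ^ a) (y ^ a) * lcm x y ^ a"
    using prod_gcd_lcm_nat[of x y] prod_gcd_lcm_nat[of "x ^ a" "y ^ a"]
    by (metis gcd_exp power_mult_distrib)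
  then show ?thesis using False by simp
qed (cases a; auto)

lemma Lcm_power_dvd_iff:
  fixes A :: "nat set"
  assumes "finite A"
  shows "Lcm A ^ a dvd j \<longleftrightarrow> (\<forall>x\<in>A. x ^ a dvd j)"
  using assms by (induction A rule: finite_induct) (simp_all add: lcm_power_nat)

lemma prod_sum_divisors_power_dvd:
  fixes k :: "'i \<Rightarrow> nat" and F :: "'i \<Rightarrow> nat \<Rightarrow> 'a :: comm_semiring_1"
  assumes "finite I" "\<And>i. i \<in> I \<Longrightarrow> k i > 0"
  shows "(\<Prod>i\<in>I. \<Sum>e | e dvd k i \<and> e ^ a dvd j. F i e) =
    (\<Sum>d \<in> PiE I (\<lambda>i. {e. e dvd k i}). if Lcm (d ` I) ^ a dvd j then \<Prod>i\<in>I. F i (d i) else 0)"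
proof -
  have "(\<Prod>i\<in>I. \<Sum>e | e dvd k i \<and> e ^ a dvd j. F i e) =
      (\<Prod>i\<in>I. \<Sum>e \<in> {e. e dvd k i}. if e ^ a dvd j then F i e else 0)"
    using assms(2) by (intro prod.cong refl) (simp add: sum.inter_filter[symmetric] conj_commute)
  also have "\<dots> = (\<Sum>d \<in> PiE I (\<lambda>i. {e. e dvd k i}). \<Prod>i\<in>I. if d i ^ a dvd j then F i (d i) else 0)"
    using assms by (intro prod_sum_PiE) simp_all
  also have "\<dots> = (\<Sum>d \<in> PiE I (\<lambda>i. {e. e dvd k i}). if Lcm (d ` I) ^ a dvd j then \<Prod>i\<in>I. F i (d i) else 0)"
    using assms(1) by (intro sum.cong refl) (auto simp: Lcm_power_dvd_iff intro!: prod_zero)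
  finally show ?thesis .
qed

theorem mainTheorem4:
  fixes a n r :: nat and k :: "nat \<Rightarrow> nat" and g :: "nat \<Rightarrow> nat \<Rightarrow> complex"
  assumes "a \<ge> 1" "n \<ge> 1" "r \<ge> 1" "\<And>i. i \<in> {1..n} \<Longrightarrow> k i \<ge> 1"
  defines "K \<equiv> Lcm (k ` {1..n})"
  shows "(1 / of_nat K ^ (a * r)) *
      (\<Sum>j = 1..K ^ a. of_nat j ^ r *
         (\<Prod>i = 1..n. \<Sum>d | d dvd k i \<and> d ^ a dvd j. dconv (g i) moebius (k i div d)))
    = (1/2) * (\<Prod>i = 1..n. g i (k i))
      + (1 / of_nat (r + 1)) *
        (\<Sum>m = 0..r div 2. of_nat ((r + 1) choose (2 * m)) * complex_of_real (bernoulli (2 * m))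
           / (of_nat K powi (int a * (2 * int m - 1))) *
           (\<Sum>d \<in> PiE {1..n} (\<lambda>i. {e. e dvd k i}).
              of_nat (Lcm (d ` {1..n})) powi (int a * (2 * int m - 1)) *
              (\<Prod>i = 1..n. dconv (g i) moebius (k i div d i))))"
proof -
  define D where "D = PiE {1..n} (\<lambda>i. {e. e dvd k i})"
  define L where "L d = Lcm (d ` {1..n})" for d :: "nat \<Rightarrow> nat"
  define P where "P d = (\<Prod>i = 1..n. dconv (g i) moebius (k i div d i))" for d
  define E where "E m = int a * (2 * int m - 1)" for m :: nat
  define c where "c m = of_nat ((r + 1) choose (2 * m)) * complex_of_real (bernoulli (2 * m))
      / of_nat K powi E m" for m
  have k: "\<And>i. i \<in> {1..n} \<Longrightarrow> k i > 0" using assms(4) by fastforce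
  have "0 \<notin> k ` {1..n}" using k by force
  then have "K > 0" by (simp add: K_def zero_less_iff_neq_zero)
  have L_dvd: "L d dvd K" if "d \<in> D" for d
    using that by (auto simp: K_def D_def L_def intro: Lcm_mono)
  have expand: "(\<Prod>i = 1..n. \<Sum>d | d dvd k i \<and> d ^ a dvd j. dconv (g i) moebius (k i div d)) =
      (\<Sum>d\<in>D. if L d ^ a dvd j then P d else 0)" for j
    unfolding D_def L_def P_def by (rule prod_sum_divisors_power_dvd) (use k in auto)
  have "(1 / of_nat K ^ (a * r)) * (\<Sum>j = 1..K ^ a. of_nat j ^ r *
         (\<Prod>i = 1..n. \<Sum>d | d dvd k i \<and> d ^ a dvd j. dconv (g i) moebius (k i div d)))
      = (\<Sum>d\<in>D. P d * (1 / of_nat K ^ (a * r) *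
          (\<Sum>j = 1..K ^ a. if L d ^ a dvd j then of_nat j ^ r else 0)))"
    unfolding expand sum_distrib_left by (subst sum.swap) (intro sum.cong refl; simp)
  also have "\<dots> = (\<Sum>d\<in>D. P d * (1 / 2 + 1 / of_nat (r + 1) * (\<Sum>m = 0..r div 2. c m * of_nat (L d) powi E m)))"
    using L_dvd \<open>K > 0\<close> assms(3)
    by (intro sum.cong refl) (simp only: sum_powers_of_multiples c_def E_def)
  also have "\<dots> = 1 / 2 * (\<Sum>d\<in>D. P d) + 1 / of_nat (r + 1) *
      (\<Sum>m = 0..r div 2. c m * (\<Sum>d\<in>D. of_nat (L d) powi E m * P d))"
    by (simp add: algebra_simps sum.distrib sum_distrib_left sum_divide_distrib sum.swap[of _ D])
  also have "(\<Sum>d\<in>D. P d) = (\<Prod>i = 1..n. g i (k i))"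
    unfolding D_def P_def by (rule sum_PiE_divisors_dconv_moebius) (use k in auto)
  finally show ?thesis by (simp add: D_def L_def P_def c_def E_def)
qed

end
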